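(* Let $\varrho$ be a state on $\mathcal H_A\otimes\mathcal H_B\otimes\mathcal H_C$ with $\mathcal H_A=\mathcal H_B$, and let $F_{AB}$ be the flip operator exchanging $A$ and $B$. If $F_{AB}\,\mathrm{Tr}_C(\varrho)=\pm\mathrm{Tr}_C(\varrho)$, then $(F_{AB}\otimes\mathbb 1_C)\varrho=\pm\varrho$ (with the same sign).
   Context: $F_{AB}=\sum_{i,j}|ij\rangle\langle ji|$ on $\mathcal H_A\otimes\mathcal H_B$ (finite-dimensional Hilbert spaces). *)

theory Defs
  imports "HOL-Analysis.Analysis" "HOL-Library.Complex_Order"
begin

text \<open>Finite-dimensional Hilbert spaces are modelled as \<open>complex ^ 'i\<close> for a finite
  index type \<open>'i\<close> (an orthonormal basis); operators are matrices \<open>complex ^ 'i ^ 'i\<close>.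
  The system ABC has basis index \<open>('a \<times> 'a) \<times> 'c\<close>, with H_A = H_B = \<open>complex ^ 'a\<close>.\<close>

definition positive_semidef :: "complex ^ 'n ^ 'n \<Rightarrow> bool" where
  "positive_semidef M \<longleftrightarrow>
     (\<forall>v :: complex ^ 'n. 0 \<le> (\<Sum>i\<in>UNIV. \<Sum>j\<in>UNIV. cnj (v $ i) * M $ i $ j * v $ j))"

definition mtrace :: "complex ^ 'n ^ 'n \<Rightarrow> complex" where
  "mtrace M = (\<Sum>i\<in>UNIV. M $ i $ i)"

definition is_state :: "complex ^ 'n ^ 'n \<Rightarrow> bool" where
  "is_state M \<longleftrightarrow> positive_semidef M \<and> mtrace M = 1"

definition flip :: "complex ^ ('a::finite \<times> 'a) ^ ('a \<times> 'a)" where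
  "flip = (\<chi> x y. if fst x = snd y \<and> snd x = fst y then 1 else 0)"

definition tensor_op :: "complex ^ 'm::finite ^ 'm \<Rightarrow> complex ^ 'n::finite ^ 'n \<Rightarrow> complex ^ ('m \<times> 'n) ^ ('m \<times> 'n)" where
  "tensor_op A B = (\<chi> x y. A $ fst x $ fst y * B $ snd x $ snd y)"

definition ptrace2 :: "complex ^ ('m::finite \<times> 'n::finite) ^ ('m \<times> 'n) \<Rightarrow> complex ^ 'm ^ 'm" where
  "ptrace2 M = (\<chi> x y. \<Sum>k\<in>UNIV. M $ (x, k) $ (y, k))"

end

theory Submission
  imports Defs
begin

text \<open>Write \<open>G = F\<^sub>A\<^sub>B \<otimes> 1\<^sub>C\<close>. It is a Hermitian involution, so
  \<open>P = (1 - s G) / 2\<close> is an orthogonal projection, and \<open>G \<rho> = s \<rho>\<close> means exactly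
  \<open>P \<rho> = 0\<close>. Taking the trace of the hypothesis gives
  \<open>tr (G \<rho>) = tr (F\<^sub>A\<^sub>B tr\<^sub>C \<rho>) = s\<close>, hence \<open>tr (P \<rho>) = (1 - s\<^sup>2) / 2 = 0\<close>.
  But \<open>tr (P \<rho>) = tr (P \<rho> P)\<close> is the sum of the nonnegative numbers
  \<open>\<langle>P e\<^sub>x, \<rho> P e\<^sub>x\<rangle>\<close>, so all of them vanish; for a positive semidefinite \<open>\<rho>\<close> this
  puts every \<open>P e\<^sub>x\<close> into the kernel of the form of \<open>\<rho>\<close>, which forces \<open>P \<rho> = 0\<close>.\<close>

definition hermitian :: "complex ^ 'n ^ 'n \<Rightarrow> bool" where
  "hermitian M \<longleftrightarrow> map_matrix cnj (transpose M) = M"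

lemma hermitian_iff: "hermitian M \<longleftrightarrow> (\<forall>i j. cnj (M $ j $ i) = M $ i $ j)"
  by (simp add: hermitian_def vec_eq_iff transpose_def)

lemma hermitian_mat_1: "hermitian (mat 1)"
  by (simp add: hermitian_iff mat_def)

lemma hermitian_add: "hermitian A \<Longrightarrow> hermitian B \<Longrightarrow> hermitian (A + B)"
  by (simp add: hermitian_iff)

lemma hermitian_scaleR: "hermitian A \<Longrightarrow> hermitian (r *\<^sub>R A)"
  by (simp add: hermitian_iff)

definition sesq_form :: "complex ^ 'n ^ 'n \<Rightarrow> complex ^ 'n \<Rightarrow> complex ^ 'n \<Rightarrow> complex"
  where
  "sesq_form M v w = (\<Sum>i\<in>UNIV. \<Sum>j\<in>UNIV. cnj (v $ i) * M $ i $ j * w $ j)"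

lemma positive_semidef_iff_sesq_form:
  "positive_semidef M \<longleftrightarrow> (\<forall>v. 0 \<le> sesq_form M v v)"
  by (simp add: positive_semidef_def sesq_form_def)

lemma sesq_form_eq: "sesq_form M v w = (\<Sum>i\<in>UNIV. cnj (v $ i) * (M *v w) $ i)"
  by (simp add: sesq_form_def matrix_vector_mult_def sum_distrib_left mult.assoc)

lemma sesq_form_add_scaled:
  "sesq_form M (v + t *s w) (v + t *s w) =
     sesq_form M v v + t * sesq_form M v w + cnj t * sesq_form M w v + cnj t * t * sesq_form M w w"
  by (simp add: sesq_form_def algebra_simps sum.distrib sum_distrib_left)

lemma nonneg_quadratic_imp_linear_coeff_eq_0:
  fixes a c :: real
  assumes nonneg: "\<And>r. 0 \<le> r * a + r\<^sup>2 * c"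
  shows "a = 0"
proof -
  have "0 \<le> a + c" and "0 \<le> - a + c"
    using nonneg[of 1] nonneg[of "-1"] by simp_all
  show ?thesis
  proof (cases "c = 0")
    case True
    with \<open>0 \<le> a + c\<close> \<open>0 \<le> - a + c\<close> show ?thesis by simp
  next
    case False
    with \<open>0 \<le> a + c\<close> \<open>0 \<le> - a + c\<close> have "c > 0" by simp
    have "0 \<le> (- a / (2 * c)) * a + (- a / (2 * c))\<^sup>2 * c"
      by (rule nonneg)
    also have "\<dots> = - (a\<^sup>2 / (4 * c))"
      using \<open>c > 0\<close> by (simp add: field_simps power2_eq_square)
    finally show ?thesis
      using \<open>c > 0\<close> by (simp add: divide_le_0_iff)
  qed
qed

lemma complex_nonneg_quadratic_imp_linear_coeff_eq_0:
  fixes a c :: complex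
  assumes nonneg: "\<And>r::real. 0 \<le> of_real r * a + of_real (r\<^sup>2) * c"
  shows "a = 0"
proof -
  have "Im a + Im c = 0" and "- Im a + Im c = 0"
    using nonneg[of 1] nonneg[of "-1"] by (simp_all add: less_eq_complex_def)
  moreover have "0 \<le> r * Re a + r\<^sup>2 * Re c" for r
    using nonneg[of r] by (simp add: less_eq_complex_def)
  then have "Re a = 0"
    by (rule nonneg_quadratic_imp_linear_coeff_eq_0)
  ultimately show ?thesis
    by (simp add: complex_eq_iff)
qed

lemma positive_semidef_sesq_form_eq_0:
  assumes "positive_semidef M" and "sesq_form M v v = 0"
  shows "sesq_form M v w = 0"
proof -
  let ?a = "sesq_form M v w" and ?b = "sesq_form M w v" and ?c = "sesq_form M w w"
  have nonneg: "0 \<le> sesq_form M (v + t *s w) (v + t *s w)" for t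
    using assms(1) by (simp add: positive_semidef_iff_sesq_form)
  have "?a + ?b = 0"
  proof (rule complex_nonneg_quadratic_imp_linear_coeff_eq_0)
    show "0 \<le> of_real r * (?a + ?b) + of_real (r\<^sup>2) * ?c" for r
      using nonneg[of "of_real r"] assms(2)
      by (simp add: sesq_form_add_scaled algebra_simps power2_eq_square)
  qed
  moreover have "\<i> * (?a - ?b) = 0"
  proof (rule complex_nonneg_quadratic_imp_linear_coeff_eq_0)
    show "0 \<le> of_real r * (\<i> * (?a - ?b)) + of_real (r\<^sup>2) * ?c" for r
      using nonneg[of "\<i> * of_real r"] assms(2)
      by (simp add: sesq_form_add_scaled algebra_simps power2_eq_square)
  qed
  ultimately show ?thesis
    by (simp add: algebra_simps)
qed

lemma sesq_form_column_hermitian: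
  assumes "hermitian P"
  shows "sesq_form M (column x P) w = (P ** M *v w) $ x"
proof -
  have "(P ** M *v w) $ x = (\<Sum>i\<in>UNIV. P $ x $ i * (M *v w) $ i)"
    by (simp add: matrix_vector_mul_assoc[symmetric] matrix_vector_mult_def[of P])
  with assms show ?thesis
    by (simp add: sesq_form_eq hermitian_iff column_def)
qed

lemma matrix_vector_mult_column: "A *v column x B = column x (A ** B)"
  by (simp add: vec_eq_iff matrix_vector_mult_def matrix_matrix_mult_def column_def)

lemma positive_semidef_projection_mult_eq_0:
  assumes "positive_semidef M" and "hermitian P" and "P ** P = P" and "trace (P ** M) = 0"
  shows "P ** M = 0"
proof -
  let ?q = "\<lambda>x. sesq_form M (column x P) (column x P)"
  have "?q x = (P ** M ** P) $ x $ x" for x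
    unfolding sesq_form_column_hermitian[OF assms(2)] matrix_vector_mult_column
    by (simp add: column_def)
  then have "(\<Sum>x\<in>UNIV. ?q x) = trace (P ** M ** P)"
    by (simp add: trace_def)
  also have "\<dots> = trace ((P ** P) ** M)"
    by (simp add: trace_mul_sym[of "P ** M"] matrix_mul_assoc)
  finally have "(\<Sum>x\<in>UNIV. ?q x) = 0"
    using assms(3,4) by simp
  moreover have "0 \<le> ?q x" for x
    using assms(1) by (simp add: positive_semidef_iff_sesq_form)
  ultimately have "?q x = 0" for x
    by (simp add: sum_nonneg_eq_0_iff)
  then have "(P ** M *v w) $ x = 0" for x w
    using positive_semidef_sesq_form_eq_0[OF assms(1)] sesq_form_column_hermitian[OF assms(2)]
    by metis
  then show ?thesis
    by (simp add: matrix_eq vec_eq_iff)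
qed

lemma matrix_add_rdistrib: "(A + B) ** C = A ** C + B ** C"
  by (vector matrix_matrix_mult_def sum.distrib[symmetric] field_simps)

lemma trace_scaleR: "trace (c *\<^sub>R A) = c *\<^sub>R trace A"
  by (simp add: trace_def scaleR_sum_right)

definition eigenproj :: "complex ^ 'n ^ 'n \<Rightarrow> real \<Rightarrow> complex ^ 'n ^ 'n" where
  "eigenproj G t = (1/2) *\<^sub>R (mat 1 + t *\<^sub>R G)"

lemma eigenproj_idem:
  assumes "G ** G = mat 1" and "t * t = 1"
  shows "eigenproj G t ** eigenproj G t = eigenproj G t"
proof -
  let ?Q = "mat 1 + t *\<^sub>R G"
  have "?Q ** G = G + t *\<^sub>R mat 1"
    using assms(1) by (simp add: matrix_add_rdistrib scalar_matrix_assoc[symmetric])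
  then have "?Q ** ?Q = ?Q + t *\<^sub>R (G + t *\<^sub>R mat 1)"
    by (simp add: matrix_add_ldistrib matrix_scalar_ac scalar_matrix_assoc[symmetric])
  also have "t *\<^sub>R (G + t *\<^sub>R mat 1) = ?Q"
    using assms(2) by (simp add: scaleR_add_right add.commute)
  finally have "?Q ** ?Q = 2 *\<^sub>R ?Q"
    by (simp only: scaleR_2)
  then show ?thesis
    by (simp add: eigenproj_def matrix_scalar_ac scalar_matrix_assoc[symmetric])
qed

lemma hermitian_eigenproj: "hermitian G \<Longrightarrow> hermitian (eigenproj G t)"
  by (simp add: eigenproj_def hermitian_add hermitian_scaleR hermitian_mat_1)

lemma trace_eigenproj_mult:
  "trace (eigenproj G t ** M) = (1/2) *\<^sub>R (trace M + t *\<^sub>R trace (G ** M))"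
  by (simp add: eigenproj_def scalar_matrix_assoc[symmetric] matrix_add_rdistrib trace_add trace_scaleR)

lemma eigenproj_mult_eq_0_iff:
  assumes "t * t = 1"
  shows "eigenproj G t ** M = 0 \<longleftrightarrow> G ** M = (- t) *\<^sub>R M"
proof -
  have "eigenproj G t ** M = 0 \<longleftrightarrow> M = - t *\<^sub>R (G ** M)"
    by (auto simp: eigenproj_def scalar_matrix_assoc[symmetric] matrix_add_rdistrib eq_neg_iff_add_eq_0)
  also have "\<dots> \<longleftrightarrow> G ** M = (- t) *\<^sub>R M"
  proof
    assume "M = - t *\<^sub>R (G ** M)"
    then have "t *\<^sub>R M = t *\<^sub>R (- t *\<^sub>R (G ** M))"
      by (rule arg_cong)
    also have "\<dots> = - (G ** M)"
      using assms by simp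
    finally show "G ** M = (- t) *\<^sub>R M"
      by simp
  next
    assume "G ** M = (- t) *\<^sub>R M"
    with assms show "M = - t *\<^sub>R (G ** M)"
      by simp
  qed
  finally show ?thesis .
qed

lemma sum_UNIV_prod: "(\<Sum>z\<in>UNIV. f z) = (\<Sum>x\<in>UNIV. \<Sum>y\<in>UNIV. f (x, y))"
  unfolding sum.cartesian_product UNIV_Times_UNIV by simp

lemma tensor_op_mult: "tensor_op A B ** tensor_op C D = tensor_op (A ** C) (B ** D)"
  by (simp add: vec_eq_iff tensor_op_def matrix_matrix_mult_def sum_product sum_UNIV_prod mult_ac)

lemma tensor_op_mat_1: "tensor_op (mat 1) (mat 1) = mat 1"
  by (simp add: vec_eq_iff tensor_op_def mat_def prod_eq_iff)

lemma hermitian_tensor_op: "hermitian A \<Longrightarrow> hermitian B \<Longrightarrow> hermitian (tensor_op A B)"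
  by (simp add: hermitian_iff tensor_op_def)

lemma flip_entry: "flip $ p $ q = (if q = prod.swap p then 1 else 0)"
  by (cases p; cases q) (auto simp: flip_def)

lemma hermitian_flip: "hermitian flip"
  by (auto simp: hermitian_iff flip_entry)

lemma flip_mult_flip: "flip ** flip = mat 1"
proof -
  have "(flip ** flip) $ p $ q = flip $ prod.swap p $ q" for p q :: "'a \<times> 'a"
    by (simp add: matrix_matrix_mult_def flip_entry[of p] if_distrib[of "\<lambda>x. x * _"] cong: if_cong)
  then show ?thesis
    by (simp add: vec_eq_iff flip_entry mat_def)
qed

lemma trace_ptrace2: "trace (ptrace2 M) = trace M"
  by (simp add: trace_def ptrace2_def sum_UNIV_prod)

lemma tensor_op_mat_1_mult_entry:
  "(tensor_op A (mat 1) ** M) $ (p, k) $ y = (\<Sum>q\<in>UNIV. A $ p $ q * M $ (q, k) $ y)"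
  by (simp add: matrix_matrix_mult_def tensor_op_def mat_def sum_UNIV_prod
      if_distrib[of "\<lambda>x. _ * x * _"] cong: if_cong)

lemma trace_tensor_op_mat_1_mult: "trace (tensor_op A (mat 1) ** M) = trace (A ** ptrace2 M)"
proof -
  have "trace (tensor_op A (mat 1) ** M) =
      (\<Sum>p\<in>UNIV. \<Sum>k\<in>UNIV. \<Sum>q\<in>UNIV. A $ p $ q * M $ (q, k) $ (p, k))"
    by (simp add: trace_def tensor_op_mat_1_mult_entry sum_UNIV_prod)
  also have "\<dots> = (\<Sum>p\<in>UNIV. \<Sum>q\<in>UNIV. \<Sum>k\<in>UNIV. A $ p $ q * M $ (q, k) $ (p, k))"
    by (intro sum.cong refl sum.swap)
  also have "\<dots> = trace (A ** ptrace2 M)"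
    by (simp add: trace_def matrix_matrix_mult_def ptrace2_def sum_distrib_left)
  finally show ?thesis .
qed

lemma mtrace_eq_trace: "mtrace = trace"
  by (simp add: fun_eq_iff mtrace_def trace_def)

theorem mainTheorem5:
  fixes rho :: "complex ^ (('a::finite \<times> 'a) \<times> 'c::finite) ^ (('a \<times> 'a) \<times> 'c)"
    and s :: real
  assumes "is_state rho"
    and "s = 1 \<or> s = -1"
    and "flip ** ptrace2 rho = s *\<^sub>R ptrace2 rho"
  shows "tensor_op flip (mat 1 :: complex ^ 'c ^ 'c) ** rho = s *\<^sub>R rho"
proof -
  define G :: "complex ^ (('a \<times> 'a) \<times> 'c) ^ (('a \<times> 'a) \<times> 'c)"
    where "G = tensor_op flip (mat 1)"
  have psd: "positive_semidef rho" and tr: "trace rho = 1"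
    using assms(1) by (simp_all add: is_state_def mtrace_eq_trace)
  have s2: "(- s) * (- s) = 1"
    using assms(2) by auto
  have inv: "G ** G = mat 1"
    by (simp add: G_def tensor_op_mult flip_mult_flip tensor_op_mat_1)
  have herm: "hermitian G"
    by (simp add: G_def hermitian_tensor_op hermitian_flip hermitian_mat_1)
  have "trace (G ** rho) = s *\<^sub>R trace rho"
    by (simp add: G_def trace_tensor_op_mat_1_mult assms(3) trace_scaleR trace_ptrace2)
  then have "trace (eigenproj G (- s) ** rho) = 0"
    using s2 tr by (simp add: trace_eigenproj_mult scaleR_conv_of_real flip: of_real_mult)
  then have "eigenproj G (- s) ** rho = 0"
    by (rule positive_semidef_projection_mult_eq_0
        [OF psd hermitian_eigenproj[OF herm] eigenproj_idem[OF inv s2]])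
  then show ?thesis
    using s2 by (simp add: G_def eigenproj_mult_eq_0_iff)
qed

end
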